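(* For every $F\in\mathbb{N}^d$, $N(F)\le\sqrt{3}^{\,\|F\|}$.
   Context: $\mathbb{N}=\{0,1,2,\dots\}$. A GNS is a submonoid $S\subseteq\mathbb{N}^d$ with finite complement $\mathcal{H}(S)=\mathbb{N}^d\setminus S$. A Frobenius GNS with Frobenius gap $F$ is a GNS such that $F$ is the unique maximal element of $\mathcal{H}(S)$ for the natural partial order. $N(F)$ is the number of Frobenius GNS $S\subseteq\mathbb{N}^d$ with Frobenius gap $F$. $\|F\|=\prod_{i=1}^d(F^{(i)}+1)$. *)

theory Defs
  imports Complex_Main
begin

definition NN :: "nat \<Rightarrow> nat list set" where
  "NN d = {x. length x = d}"

definition vzero :: "nat \<Rightarrow> nat list" where
  "vzero d = replicate d 0"

definition vadd :: "nat list \<Rightarrow> nat list \<Rightarrow> nat list" where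
  "vadd x y = map2 (+) x y"

definition vle :: "nat list \<Rightarrow> nat list \<Rightarrow> bool" where
  "vle x y \<longleftrightarrow> length x = length y \<and> (\<forall>i < length x. x ! i \<le> y ! i)"

definition submonoid :: "nat \<Rightarrow> nat list set \<Rightarrow> bool" where
  "submonoid d S \<longleftrightarrow> S \<subseteq> NN d \<and> vzero d \<in> S \<and> (\<forall>x\<in>S. \<forall>y\<in>S. vadd x y \<in> S)"

definition gaps :: "nat \<Rightarrow> nat list set \<Rightarrow> nat list set" where
  "gaps d S = NN d - S"

definition GNS :: "nat \<Rightarrow> nat list set \<Rightarrow> bool" where
  "GNS d S \<longleftrightarrow> submonoid d S \<and> finite (gaps d S)"

definition is_maximal :: "nat list set \<Rightarrow> nat list \<Rightarrow> bool" where
  "is_maximal A x \<longleftrightarrow> x \<in> A \<and> (\<forall>y\<in>A. vle x y \<longrightarrow> y = x)"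

definition Frobenius_GNS :: "nat \<Rightarrow> nat list set \<Rightarrow> nat list \<Rightarrow> bool" where
  "Frobenius_GNS d S F \<longleftrightarrow> GNS d S \<and> is_maximal (gaps d S) F \<and>
     (\<forall>G. is_maximal (gaps d S) G \<longrightarrow> G = F)"

definition N_Frob :: "nat \<Rightarrow> nat list \<Rightarrow> nat" where
  "N_Frob d F = card {S. Frobenius_GNS d S F}"

definition boxnorm :: "nat list \<Rightarrow> nat" where
  "boxnorm F = (\<Prod>i<length F. F ! i + 1)"

end

theory Submission
  imports Defs
begin

text \<open>Every gap of a Frobenius GNS lies below some maximal gap, hence below F; so S is determined
by its trace on the box B = {x. x \<le> F}. If x and F - x both lay in S, so would their sum F, which is a
gap. Hence the trace on B contains no orbit of the involution x \<mapsto> F - x of B: each 2-orbit allows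
3 choices and each fixed point none, giving at most sqrt 3 ^ |B| traces.\<close>

definition free_subsets :: "('a \<Rightarrow> 'a) \<Rightarrow> 'a set \<Rightarrow> 'a set set" where
  "free_subsets \<sigma> A = {T. T \<subseteq> A \<and> (\<forall>x\<in>T. \<sigma> x \<notin> T)}"

lemma finite_free_subsets: "finite A \<Longrightarrow> finite (free_subsets \<sigma> A)"
  unfolding free_subsets_def by (rule finite_subset[of _ "Pow A"]) auto

lemma free_subsets_remove_fixpoint:
  "\<sigma> x = x \<Longrightarrow> free_subsets \<sigma> A = free_subsets \<sigma> (A - {x})"
  unfolding free_subsets_def by auto

lemma card_free_subsets_remove_pair:
  assumes "finite A"
  shows "card (free_subsets \<sigma> A) \<le> 3 * card (free_subsets \<sigma> (A - {x, \<sigma> x}))"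
proof -
  let ?A = "A - {x, \<sigma> x}"
  let ?P = "free_subsets \<sigma> ?A \<times> {{}, {x}, {\<sigma> x}}"
  have split: "free_subsets \<sigma> A \<subseteq> (\<lambda>(T, U). T \<union> U) ` ?P"
  proof
    fix T assume T: "T \<in> free_subsets \<sigma> A"
    then have "T \<inter> ?A \<in> free_subsets \<sigma> ?A" "T - ?A \<in> {{}, {x}, {\<sigma> x}}"
      unfolding free_subsets_def by auto
    then show "T \<in> (\<lambda>(T, U). T \<union> U) ` ?P"
      by (intro image_eqI[of _ _ "(T \<inter> ?A, T - ?A)"]) auto
  qed
  have fin: "finite ?P" using finite_free_subsets assms by blast
  have "card (free_subsets \<sigma> A) \<le> card ?P"
    using card_mono[OF finite_imageI[OF fin] split] card_image_le[OF fin, of "\<lambda>(T, U). T \<union> U"]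
    by linarith
  also have "\<dots> \<le> 3 * card (free_subsets \<sigma> ?A)"
    by (simp add: card_cartesian_product card_insert_if)
  finally show ?thesis .
qed

lemma card_free_subsets_involution:
  assumes "finite A" "\<And>x. x \<in> A \<Longrightarrow> \<sigma> x \<in> A" "\<And>x. x \<in> A \<Longrightarrow> \<sigma> (\<sigma> x) = x"
  shows "real (card (free_subsets \<sigma> A)) \<le> sqrt 3 ^ card A"
  using assms
proof (induction "card A" arbitrary: A rule: less_induct)
  case less
  show ?case
  proof (cases "A = {}")
    case True
    then have "free_subsets \<sigma> A = {{}}" unfolding free_subsets_def by auto
    then show ?thesis using True by simp
  next
    case False
    then obtain x where x: "x \<in> A" by blast
    show ?thesis
    proof (cases "\<sigma> x = x")
      case True
      let ?A = "A - {x}"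
      have smaller: "card ?A < card A" using x less.prems(1) by (meson card_Diff1_less)
      have "\<sigma> y \<in> ?A" if "y \<in> ?A" for y
        using that less.prems(2) less.prems(3)[of y] True by auto
      then have "real (card (free_subsets \<sigma> ?A)) \<le> sqrt 3 ^ card ?A"
        using less.hyps[OF smaller] less.prems by auto
      also have "\<dots> \<le> sqrt 3 ^ card A" using smaller by (intro power_increasing) auto
      finally show ?thesis using free_subsets_remove_fixpoint[of \<sigma> x A] True by simp
    next
      case False
      let ?A = "A - {x, \<sigma> x}"
      have "{x, \<sigma> x} \<subseteq> A" using x less.prems(2) by blast
      then have card_A: "card A = card ?A + 2"
        using False less.prems(1) card_mono[of A "{x, \<sigma> x}"] by (simp add: card_Diff_subset)
      have "\<sigma> y \<in> ?A" if "y \<in> ?A" for y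
        using that less.prems(2) less.prems(3)[of y] less.prems(3)[OF x] by auto
      then have "real (card (free_subsets \<sigma> ?A)) \<le> sqrt 3 ^ card ?A"
        using less.hyps[of ?A] less.prems card_A by auto
      then have "real (card (free_subsets \<sigma> A)) \<le> 3 * sqrt 3 ^ card ?A"
        using card_free_subsets_remove_pair[OF less.prems(1), of \<sigma> x] by linarith
      also have "\<dots> = sqrt 3 ^ card A" by (simp add: card_A power_add)
      finally show ?thesis .
    qed
  qed
qed

lemma vle_iff_list_all2: "vle x y \<longleftrightarrow> list_all2 (\<le>) x y"
  unfolding vle_def by (simp add: list_all2_conv_all_nth)

lemma vle_trans: "vle x y \<Longrightarrow> vle y z \<Longrightarrow> vle x z"
  unfolding vle_def by (metis order_trans)

lemma vle_antisym_sum_list: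
  "vle x y \<Longrightarrow> sum_list y \<le> sum_list x \<Longrightarrow> x = y"
  unfolding vle_iff_list_all2
proof (induction rule: list_all2_induct)
  case (Cons a as b bs)
  have "sum_list as \<le> sum_list bs"
    using Cons.hyps(2) by (induction rule: list_all2_induct) auto
  then show ?case using Cons by auto
qed simp

lemma exists_maximal_above:
  assumes "finite A" "g \<in> A"
  shows "\<exists>m. is_maximal A m \<and> vle g m"
proof -
  let ?C = "{z \<in> A. vle g z}"
  have "finite ?C" "g \<in> ?C" using assms unfolding vle_def by auto
  then obtain m where m: "m \<in> ?C" "sum_list m = Max (sum_list ` ?C)"
    using Max_in[of "sum_list ` ?C"] by fastforce
  have "y = m" if "y \<in> A" "vle m y" for y
  proof -
    have "y \<in> ?C" using that m vle_trans by blast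
    then have "sum_list y \<le> sum_list m" using m \<open>finite ?C\<close> by simp
    then show "y = m" using vle_antisym_sum_list[OF that(2)] by simp
  qed
  then show ?thesis using m unfolding is_maximal_def by blast
qed

lemma Frobenius_GNS_gap_le:
  assumes "Frobenius_GNS d S F" "g \<in> gaps d S"
  shows "vle g F"
proof -
  have "finite (gaps d S)" using assms(1) unfolding Frobenius_GNS_def GNS_def by simp
  then obtain m where "is_maximal (gaps d S) m" "vle g m"
    using exists_maximal_above assms(2) by blast
  then show ?thesis using assms(1) unfolding Frobenius_GNS_def by blast
qed

definition box :: "nat list \<Rightarrow> nat list set" where
  "box F = {x. vle x F}"

lemma box_Cons: "box (a # F) = (\<lambda>(h, t). h # t) ` ({0..a} \<times> box F)"
proof -
  have "vle x (a # F) \<longleftrightarrow> (\<exists>h t. x = h # t \<and> h \<le> a \<and> vle t F)" for x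
    unfolding vle_iff_list_all2 by (auto simp: list_all2_Cons2)
  then show ?thesis unfolding box_def by auto
qed

lemma boxnorm_Cons: "boxnorm (a # F) = (a + 1) * boxnorm F"
  unfolding boxnorm_def by (simp add: prod.lessThan_Suc_shift del: prod.lessThan_Suc)

lemma finite_box_card: "finite (box F) \<and> card (box F) = boxnorm F"
proof (induction F)
  case Nil
  have "box [] = {[]}" unfolding box_def vle_def by auto
  then show ?case by (simp add: boxnorm_def)
next
  case (Cons a F)
  have "inj_on (\<lambda>(h, t). h # t) ({0..a} \<times> box F)" by (auto simp: inj_on_def)
  then show ?case
    using Cons by (simp add: box_Cons boxnorm_Cons card_image card_cartesian_product)
qed

definition reflect :: "nat list \<Rightarrow> nat list \<Rightarrow> nat list" where
  "reflect F x = map2 (-) F x"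

lemma
  assumes "x \<in> box F"
  shows reflect_in_box: "reflect F x \<in> box F"
    and reflect_reflect: "reflect F (reflect F x) = x"
    and vadd_reflect: "vadd x (reflect F x) = F"
  using assms unfolding box_def vle_def reflect_def vadd_def
  by (auto intro!: nth_equalityI)

lemma Frobenius_GNS_determined_by_box:
  assumes "Frobenius_GNS d S F"
  shows "S = (NN d - box F) \<union> (S \<inter> box F)"
proof -
  have "S \<subseteq> NN d" using assms unfolding Frobenius_GNS_def GNS_def submonoid_def by blast
  moreover have "NN d - box F \<subseteq> S"
    using Frobenius_GNS_gap_le[OF assms] unfolding gaps_def box_def by blast
  ultimately show ?thesis by blast
qed

lemma Frobenius_GNS_box_free:
  assumes "Frobenius_GNS d S F"
  shows "S \<inter> box F \<in> free_subsets (reflect F) (box F)"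
  unfolding free_subsets_def
proof (intro CollectI conjI ballI notI)
  fix x assume x: "x \<in> S \<inter> box F" and "reflect F x \<in> S \<inter> box F"
  then have "vadd x (reflect F x) \<in> S"
    using assms unfolding Frobenius_GNS_def GNS_def submonoid_def by blast
  moreover have "F \<notin> S"
    using assms unfolding Frobenius_GNS_def is_maximal_def gaps_def by blast
  ultimately show False using vadd_reflect x by simp
qed blast

theorem lemma6p1:
  fixes d :: nat and F :: "nat list"
  assumes "F \<in> NN d"
  shows "real (N_Frob d F) \<le> sqrt 3 ^ boxnorm F"
proof -
  let ?Frob = "{S. Frobenius_GNS d S F}"
  have "inj_on (\<lambda>S. S \<inter> box F) ?Frob"
  proof (rule inj_onI)
    fix S S' assume "S \<in> ?Frob" "S' \<in> ?Frob" and trace: "S \<inter> box F = S' \<inter> box F"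
    then have "S = (NN d - box F) \<union> (S \<inter> box F)" "S' = (NN d - box F) \<union> (S' \<inter> box F)"
      using Frobenius_GNS_determined_by_box by blast+
    then show "S = S'" using trace by argo
  qed
  moreover have "(\<lambda>S. S \<inter> box F) ` ?Frob \<subseteq> free_subsets (reflect F) (box F)"
    using Frobenius_GNS_box_free by blast
  ultimately have "N_Frob d F \<le> card (free_subsets (reflect F) (box F))"
    unfolding N_Frob_def
    by (intro card_inj_on_le finite_free_subsets) (simp_all add: finite_box_card)
  then have "real (N_Frob d F) \<le> real (card (free_subsets (reflect F) (box F)))" by simp
  also have "\<dots> \<le> sqrt 3 ^ card (box F)"
    by (intro card_free_subsets_involution) (simp_all add: finite_box_card reflect_in_box reflect_reflect)
  finally show ?thesis by (simp add: finite_box_card)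
qed

end
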